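(* Let $(V,\langle\cdot\,,\cdot\rangle_V)$ be an admissible integral $\mathrm{Cl}_{r,s}$-module and $(U,\langle\cdot\,,\cdot\rangle_U)$ an admissible integral $\mathrm{Cl}_{4,4}$-module such that the representations $J_{y_j}\in\mathrm{End}(U)$ permute the integral basis of $U$ up to sign for all orthonormal generators $y_j$ of $\mathrm{Cl}_{4,4}$. Then $V\otimes U$ with the scalar product $\langle v\otimes u,v'\otimes u'\rangle=\langle v,v'\rangle_V\langle u,u'\rangle_U$ is (carries the structure of) an admissible integral $\mathrm{Cl}_{r+4,s+4}$-module.
   Context: A scalar product is a real symmetric non-degenerate bilinear form. $\mathrm{Cl}_{p,q}$ is the real Clifford algebra generated by $\mathbb R^{p,q}$ ($\mathbb R^{p+q}$ with quadratic form $x_1^2+\dots+x_p^2-x_{p+1}^2-\dots-x_{p+q}^2$) with relation $z^2=-\langle z,z\rangle\cdot1$; orthonormal generators $z_k$ satisfy $\langle z_k,z_l\rangle=0$ ($k\ne l$), $\langle z_k,z_k\rangle=\pm1$. A $\mathrm{Cl}_{p,q}$-module $V$ with representation $J$ is admissible if it carries a scalar product with $\langle J_zu,v\rangle_V=-\langle u,J_zv\rangle_V$ for all $z,u,v$; it is an admissible integral module if it has an integral basis, i.e. a basis $\{v_\alpha\}$ with $\langle v_\alpha,v_\beta\rangle_V=0$ ($\alpha\ne\beta$), $\langle v_\alpha,v_\alpha\rangle_V=\pm1$, and $\langle J_{z_k}v_\alpha,v_\beta\rangle_V\in\{1,-1,0\}$ for all orthonormal generators $z_k$ and all $\alpha,\beta$.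 An operator permutes a basis up to sign if it sends each basis vector to $\pm$ some basis vector. *)

theory Defs
  imports "HOL-Analysis.Analysis"
begin

text \<open>Finite-dimensional real modules are modelled concretely as coordinate spaces
  real^'n.\<close>

definition gen_norm :: "nat \<Rightarrow> nat \<Rightarrow> real" where
  "gen_norm p k = (if k < p then 1 else -1)"

definition scalar_product :: "('v::real_vector \<Rightarrow> 'v \<Rightarrow> real) \<Rightarrow> bool" where
  "scalar_product g \<longleftrightarrow> bilinear g \<and> (\<forall>u v. g u v = g v u)
     \<and> (\<forall>u. (\<forall>v. g u v = 0) \<longrightarrow> u = 0)"

text \<open>A representation of Cl_{p,q} on V, given by the images J k of the orthonormal
  generators z_k: linear maps with J_z J_z = - <z,z> Id and anticommuting for
  distinct generators (this is exactly an algebra homomorphism Cl_{p,q} -> End V,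
  by the universal property of the Clifford algebra).\<close>
definition clifford_rep :: "nat \<Rightarrow> nat \<Rightarrow> (nat \<Rightarrow> 'v::real_vector \<Rightarrow> 'v) \<Rightarrow> bool" where
  "clifford_rep p q J \<longleftrightarrow>
     (\<forall>k<p+q. linear (J k)) \<and>
     (\<forall>k<p+q. \<forall>v. J k (J k v) = - (gen_norm p k *\<^sub>R v)) \<and>
     (\<forall>k<p+q. \<forall>l<p+q. k \<noteq> l \<longrightarrow> (\<forall>v. J k (J l v) = - J l (J k v)))"

definition admissible :: "nat \<Rightarrow> nat \<Rightarrow> (nat \<Rightarrow> 'v::real_vector \<Rightarrow> 'v) \<Rightarrow> ('v \<Rightarrow> 'v \<Rightarrow> real) \<Rightarrow> bool" where
  "admissible p q J g \<longleftrightarrow> clifford_rep p q J \<and> scalar_product g \<and>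
     (\<forall>k<p+q. \<forall>u v. g (J k u) v = - g u (J k v))"

definition integral_basis :: "nat \<Rightarrow> nat \<Rightarrow> (nat \<Rightarrow> 'v::real_vector \<Rightarrow> 'v) \<Rightarrow> ('v \<Rightarrow> 'v \<Rightarrow> real) \<Rightarrow> 'v set \<Rightarrow> bool" where
  "integral_basis p q J g B \<longleftrightarrow> independent B \<and> span B = UNIV \<and>
     (\<forall>a\<in>B. \<forall>b\<in>B. a \<noteq> b \<longrightarrow> g a b = 0) \<and>
     (\<forall>a\<in>B. g a a = 1 \<or> g a a = -1) \<and>
     (\<forall>k<p+q. \<forall>a\<in>B. \<forall>b\<in>B. g (J k a) b \<in> {1, -1, 0})"

definition admissible_integral :: "nat \<Rightarrow> nat \<Rightarrow> (nat \<Rightarrow> 'v::real_vector \<Rightarrow> 'v) \<Rightarrow> ('v \<Rightarrow> 'v \<Rightarrow> real) \<Rightarrow> bool" where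
  "admissible_integral p q J g \<longleftrightarrow> admissible p q J g \<and> (\<exists>B. integral_basis p q J g B)"

definition permutes_up_to_sign :: "('v::real_vector \<Rightarrow> 'v) \<Rightarrow> 'v set \<Rightarrow> bool" where
  "permutes_up_to_sign A B \<longleftrightarrow> (\<forall>a\<in>B. \<exists>b\<in>B. A a = b \<or> A a = - b)"

text \<open>Tensor product of coordinate spaces: real^'n \<otimes> real^'m = real^('n \<times> 'm).\<close>
definition tensor :: "real^'n \<Rightarrow> real^'m \<Rightarrow> real^('n \<times> 'm)" where
  "tensor v u = (\<chi> ij. v $ fst ij * u $ snd ij)"

end

theory Submission imports Defs begin

text \<open>The volume element \<Omega> = J(y1) \<cdots> J(y8) of the Cl(4,4)-module U is an involution that
  anticommutes with every generator, is self-adjoint, and permutes the integral basis of U up to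
  sign.  Hence the generators z of Cl(r,s) act on V \<otimes> U as J(z) \<otimes> \<Omega> and the generators y of
  Cl(4,4) as Id \<otimes> J(y); these operators satisfy the relations of Cl(r+4,s+4), they are skew for
  the product scalar product, and on the product basis every structure constant is a product of
  two structure constants in {1, -1, 0}.\<close>

lemma tensor_add_left: "tensor (v + w) u = tensor v u + tensor w u"
  by (simp add: vec_eq_iff tensor_def algebra_simps)

lemma tensor_add_right: "tensor v (u + w) = tensor v u + tensor v w"
  by (simp add: vec_eq_iff tensor_def algebra_simps)

lemma tensor_scaleR_left: "tensor (c *\<^sub>R v) u = c *\<^sub>R tensor v u"
  by (simp add: vec_eq_iff tensor_def)

lemma tensor_scaleR_right: "tensor v (c *\<^sub>R u) = c *\<^sub>R tensor v u"
  by (simp add: vec_eq_iff tensor_def)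

lemma tensor_minus_left: "tensor (- v) u = - tensor v u"
  by (simp add: vec_eq_iff tensor_def)

lemma tensor_minus_right: "tensor v (- u) = - tensor v u"
  by (simp add: vec_eq_iff tensor_def)

lemma bilinear_tensor: "bilinear tensor"
  by (auto simp: bilinear_def tensor_add_left tensor_add_right tensor_scaleR_left
      tensor_scaleR_right intro!: linearI)

lemma tensor_axis: "axis (i, j) (1::real) = tensor (axis i 1) (axis j 1)"
  by (auto simp: vec_eq_iff axis_def tensor_def)

lemma bilinear_mem_span:
  assumes h: "bilinear h" and x: "x \<in> span A" and y: "y \<in> span C"
  shows "h x y \<in> span {h a c | a c. a \<in> A \<and> c \<in> C}"
proof -
  let ?S = "span {h a c | a c. a \<in> A \<and> c \<in> C}"
  have "span C \<subseteq> h a -` ?S" if "a \<in> A" for a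
  proof (rule span_minimal)
    show "C \<subseteq> h a -` ?S" using that by (auto intro: span_base)
    show "subspace (h a -` ?S)"
      using h by (intro linear_subspace_vimage subspace_span) (simp add: bilinear_def)
  qed
  hence "span A \<subseteq> (\<lambda>x. h x y) -` ?S"
  proof (intro span_minimal)
    show "subspace ((\<lambda>x. h x y) -` ?S)"
      using h by (intro linear_subspace_vimage subspace_span) (simp add: bilinear_def)
  qed (use y in auto)
  with x show ?thesis by auto
qed

lemma span_tensor_products:
  assumes "span BV = UNIV" and "span BU = UNIV"
  shows "span {tensor a b | a b. a \<in> BV \<and> b \<in> BU} = (UNIV :: (real^('n::finite \<times> 'm::finite)) set)"
proof -
  let ?S = "span {tensor a b | a b. a \<in> BV \<and> b \<in> BU}"
  have "Basis \<subseteq> ?S"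
  proof
    fix x :: "real^('n \<times> 'm)" assume "x \<in> Basis"
    then obtain i j where "x = tensor (axis i 1) (axis j 1)"
      by (auto simp: Basis_vec_def tensor_axis[symmetric])
    thus "x \<in> ?S"
      using bilinear_mem_span[OF bilinear_tensor, of _ BV _ BU] assms by simp
  qed
  hence "span Basis \<subseteq> ?S" by (rule span_minimal) simp
  thus ?thesis by auto
qed

lemma span_tensors: "span {tensor v u | v u. True} = (UNIV :: (real^('n::finite \<times> 'm::finite)) set)"
  using span_tensor_products[of UNIV UNIV] by simp

lemma linear_eq_on_tensors:
  fixes f h :: "real^('n::finite \<times> 'm::finite) \<Rightarrow> 'a::real_vector"
  assumes "linear f" "linear h" and "\<And>v u. f (tensor v u) = h (tensor v u)"
  shows "f = h"
proof
  fix x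
  show "f x = h x"
    by (rule linear_eq_on_span[OF assms(1,2), of "{tensor v u | v u. True}"])
      (use assms(3) span_tensors in auto)
qed

lemma bilinear_eq_on_tensors:
  fixes f h :: "real^('n::finite \<times> 'm::finite) \<Rightarrow> real^('n \<times> 'm) \<Rightarrow> real"
  assumes "bilinear f" "bilinear h"
    and "\<And>v u v' u'. f (tensor v u) (tensor v' u') = h (tensor v u) (tensor v' u')"
  shows "f = h"
proof (intro ext)
  fix x y
  show "f x y = h x y"
    by (rule bilinear_eq[OF assms(1,2), of UNIV "{tensor v u | v u. True}" UNIV "{tensor v u | v u. True}"])
      (use assms(3) span_tensors in auto)
qed

definition tensor_map ::
    "(real^'n \<Rightarrow> real^'n) \<Rightarrow> (real^'m \<Rightarrow> real^'m) \<Rightarrow> real^('n::finite \<times> 'm::finite) \<Rightarrow> real^('n \<times> 'm)"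
  where "tensor_map A C x =
    (\<chi> ij. \<Sum>k\<in>UNIV. \<Sum>l\<in>UNIV. matrix A $ fst ij $ k * matrix C $ snd ij $ l * x $ (k, l))"

lemma linear_tensor_map: "linear (tensor_map A C)"
  by (rule linearI)
    (simp_all add: tensor_map_def vec_eq_iff algebra_simps sum.distrib sum_distrib_left)

lemma tensor_map_tensor:
  assumes "linear A" "linear C"
  shows "tensor_map A C (tensor v u) = tensor (A v) (C u)"
proof -
  have A: "A v = matrix A *v v" and C: "C u = matrix C *v u"
    using assms by (simp_all add: matrix_works)
  show ?thesis unfolding A C
    by (simp add: tensor_map_def tensor_def vec_eq_iff matrix_vector_mult_def sum_product mult_ac)
qed

lemma bilinear_compose_left:
  assumes "bilinear g" "linear A" shows "bilinear (\<lambda>x y. g (A x) y)"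
  using assms unfolding bilinear_def
  by (auto intro: linear_compose[of A "\<lambda>x. g x _", unfolded o_def])

lemma bilinear_compose_right_neg:
  assumes "bilinear g" "linear A" shows "bilinear (\<lambda>x y. - g x (A y))"
  using assms unfolding bilinear_def
  by (auto intro!: linear_compose_neg intro: linear_compose[of A "g _", unfolded o_def])

lemma bilinear_swap: "bilinear g \<Longrightarrow> bilinear (\<lambda>x y. g y x)"
  unfolding bilinear_def by (simp add: conj_commute)

lemma bilinear_orthogonal_expansion:
  fixes g :: "'a::real_vector \<Rightarrow> 'a \<Rightarrow> real"
  assumes g: "bilinear g" and orth: "\<forall>a\<in>B. \<forall>b\<in>B. a \<noteq> b \<longrightarrow> g a b = 0"
    and t: "finite t" "t \<subseteq> B" and b: "b \<in> t"
  shows "g (\<Sum>a\<in>t. c a *\<^sub>R a) b = c b * g b b"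
proof -
  interpret linear "\<lambda>x. g x b" using g by (simp add: bilinear_def)
  have "g (\<Sum>a\<in>t. c a *\<^sub>R a) b = (\<Sum>a\<in>t. c a * g a b)" by (simp add: sum scale)
  also have "\<dots> = c b * g b b + (\<Sum>a\<in>t - {b}. c a * g a b)" by (rule sum.remove[OF t(1) b])
  also have "(\<Sum>a\<in>t - {b}. c a * g a b) = 0" using orth t b by (intro sum.neutral) auto
  finally show ?thesis by simp
qed

lemma independent_orthogonal:
  fixes g :: "'a::real_vector \<Rightarrow> 'a \<Rightarrow> real"
  assumes g: "bilinear g" and orth: "\<forall>a\<in>B. \<forall>b\<in>B. a \<noteq> b \<longrightarrow> g a b = 0"
    and nz: "\<forall>a\<in>B. g a a \<noteq> 0"
  shows "independent B"
proof
  assume "dependent B"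
  then obtain t c b where t: "finite t" "t \<subseteq> B" "(\<Sum>a\<in>t. c a *\<^sub>R a) = 0"
    and b: "b \<in> t" "c b \<noteq> 0"
    unfolding dependent_explicit by blast
  have "c b * g b b = 0"
    using bilinear_orthogonal_expansion[OF g orth t(1,2) b(1), of c] t(3) bilinear_lzero[OF g] by simp
  thus False using b nz t(2) by auto
qed

lemma nondegenerate_orthogonal_basis:
  fixes g :: "'a::real_vector \<Rightarrow> 'a \<Rightarrow> real"
  assumes g: "bilinear g" and orth: "\<forall>a\<in>B. \<forall>b\<in>B. a \<noteq> b \<longrightarrow> g a b = 0"
    and nz: "\<forall>a\<in>B. g a a \<noteq> 0" and span: "span B = UNIV" and x: "\<forall>v. g x v = 0"
  shows "x = 0"
proof -
  have "x \<in> span B" using span by simp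
  then obtain t c where t: "finite t" "t \<subseteq> B" and x_eq: "x = (\<Sum>a\<in>t. c a *\<^sub>R a)"
    unfolding span_explicit by blast
  have "c b = 0" if "b \<in> t" for b
    using bilinear_orthogonal_expansion[OF g orth t that, of c] x x_eq nz t(2) that by auto
  thus ?thesis using x_eq by simp
qed

lemma scalar_product_integral_basis:
  fixes g :: "'a::real_vector \<Rightarrow> 'a \<Rightarrow> real"
  assumes g: "bilinear g" and sym: "\<And>x y. g x y = g y x" and B: "integral_basis p q J g B"
  shows "scalar_product g"
proof -
  have orth: "\<forall>a\<in>B. \<forall>b\<in>B. a \<noteq> b \<longrightarrow> g a b = 0" and norm: "\<forall>a\<in>B. g a a = 1 \<or> g a a = -1"
    and span: "span B = UNIV"
    using B by (simp_all add: integral_basis_def)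
  have "\<forall>a\<in>B. g a a \<noteq> 0" using norm by force
  hence "(\<forall>v. g u v = 0) \<longrightarrow> u = 0" for u
    using nondegenerate_orthogonal_basis[OF g orth _ span] by blast
  thus ?thesis unfolding scalar_product_def using g sym by blast
qed

lemma scalar_product_tensor:
  fixes g :: "real^('n::finite \<times> 'm::finite) \<Rightarrow> real^('n \<times> 'm) \<Rightarrow> real"
  assumes g: "bilinear g" and symV: "\<And>v v'. gV v v' = gV v' v" and symU: "\<And>u u'. gU u u' = gU u' u"
    and g_tensor: "\<And>v v' u u'. g (tensor v u) (tensor v' u') = gV v v' * gU u u'"
    and B: "integral_basis p q J g B"
  shows "scalar_product g"
proof (rule scalar_product_integral_basis[OF g _ B])
  have "g = (\<lambda>x y. g y x)"
  proof (rule bilinear_eq_on_tensors[OF g bilinear_swap[OF g]])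
    show "g (tensor v u) (tensor v' u') = g (tensor v' u') (tensor v u)" for v u v' u'
      by (simp add: g_tensor symV[of v] symU[of u])
  qed
  thus "g x y = g y x" for x y by (simp add: fun_eq_iff)
qed

lemma integral_basis_value:
  "integral_basis p q J g B \<Longrightarrow> a \<in> B \<Longrightarrow> b \<in> B \<Longrightarrow> g a b \<in> {1, -1, 0}"
  unfolding integral_basis_def by (cases "a = b") auto

lemma clifford_rep_linear: "clifford_rep p q J \<Longrightarrow> k < p + q \<Longrightarrow> linear (J k)"
  unfolding clifford_rep_def by blast

lemma clifford_rep_square: "clifford_rep p q J \<Longrightarrow> k < p + q \<Longrightarrow> J k (J k v) = - (gen_norm p k *\<^sub>R v)"
  unfolding clifford_rep_def by blast

lemma clifford_rep_anticomm:
  "clifford_rep p q J \<Longrightarrow> k < p + q \<Longrightarrow> l < p + q \<Longrightarrow> k \<noteq> l \<Longrightarrow> J k (J l v) = - J l (J k v)"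
  unfolding clifford_rep_def by blast

lemma clifford_rep_minus: "clifford_rep p q J \<Longrightarrow> k < p + q \<Longrightarrow> J k (- v) = - J k v"
  by (simp add: clifford_rep_linear linear_neg)

lemma clifford_rep_square_sign:
  "clifford_rep p q J \<Longrightarrow> k < p + q \<Longrightarrow> J k (J k v) = (if k < p then - v else v)"
  by (simp add: clifford_rep_square gen_norm_def)

lemma clifford_rep_anticomm_less:
  "clifford_rep p q J \<Longrightarrow> k < p + q \<Longrightarrow> l < k \<Longrightarrow> J k (J l v) = - J l (J k v)"
  by (rule clifford_rep_anticomm) auto

lemma admissible_skew: "admissible p q J g \<Longrightarrow> k < p + q \<Longrightarrow> g (J k u) v = - g u (J k v)"
  unfolding admissible_def by blast

lemma admissible_bilinear: "admissible p q J g \<Longrightarrow> bilinear g"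
  unfolding admissible_def scalar_product_def by blast

lemma admissible_symmetric: "admissible p q J g \<Longrightarrow> g u v = g v u"
  unfolding admissible_def scalar_product_def by blast

text \<open>\<Omega>^2 = (-1)^(8\<cdot>7/2) J(0)^2 \<cdots> J(7)^2 = (-1)^4 = 1, and \<Omega> anticommutes with each J(j)
  because moving J(j) across the seven other factors costs the sign (-1)^7.\<close>

definition clifford44_volume :: "(nat \<Rightarrow> 'v \<Rightarrow> 'v) \<Rightarrow> 'v \<Rightarrow> 'v" where
  "clifford44_volume J u = J 0 (J 1 (J 2 (J 3 (J 4 (J 5 (J 6 (J 7 u)))))))"

text \<open>With anticommutation oriented so that the larger index moves inside, these rules let
  the simplifier normalise any word in the generators.\<close>

lemmas clifford44_simps =
  clifford_rep_minus clifford_rep_square_sign clifford_rep_anticomm_less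

lemma clifford44_volume_involution:
  "clifford_rep 4 4 J \<Longrightarrow> clifford44_volume J (clifford44_volume J u) = u"
  unfolding clifford44_volume_def by (simp add: clifford44_simps)

lemma clifford44_volume_anticomm:
  assumes J: "clifford_rep 4 4 J" and j: "j < 4 + 4"
  shows "clifford44_volume J (J j u) = - J j (clifford44_volume J u)"
proof -
  have "j = 0 \<or> j = 1 \<or> j = 2 \<or> j = 3 \<or> j = 4 \<or> j = 5 \<or> j = 6 \<or> j = 7" using j by auto
  thus ?thesis unfolding clifford44_volume_def by (elim disjE) (simp_all add: clifford44_simps[OF J])
qed

lemma linear_clifford44_volume:
  assumes "clifford_rep 4 4 J" shows "linear (clifford44_volume J)"
proof -
  have "clifford44_volume J = J 0 \<circ> J 1 \<circ> J 2 \<circ> J 3 \<circ> J 4 \<circ> J 5 \<circ> J 6 \<circ> J 7"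
    by (auto simp: clifford44_volume_def)
  thus ?thesis by (simp add: clifford_rep_linear[OF assms] linear_compose)
qed

lemma clifford44_volume_self_adjoint:
  assumes "admissible 4 4 J g"
  shows "g (clifford44_volume J u) v = g u (clifford44_volume J v)"
proof -
  have J: "clifford_rep 4 4 J" using assms unfolding admissible_def by blast
  show ?thesis unfolding clifford44_volume_def
    by (simp add: admissible_skew[OF assms] bilinear_rneg[OF admissible_bilinear[OF assms]]
        clifford44_simps[OF J])
qed

lemma clifford44_volume_permutes_up_to_sign:
  assumes J: "clifford_rep 4 4 J" and perm: "\<forall>j<8. permutes_up_to_sign (J j) B"
  shows "permutes_up_to_sign (clifford44_volume J) B"
  unfolding permutes_up_to_sign_def
proof
  let ?signed = "\<lambda>x. \<exists>b\<in>B. x = b \<or> x = - b"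
  have step: "?signed (J j x)" if x: "?signed x" and j: "j < 8" for j x
  proof -
    obtain b where b: "b \<in> B" "x = b \<or> x = - b" using x by blast
    obtain c where "c \<in> B" "J j b = c \<or> J j b = - c"
      using perm j b(1) unfolding permutes_up_to_sign_def by blast
    moreover have "J j (- b) = - J j b" using clifford_rep_minus[OF J] j by simp
    ultimately show ?thesis using b by auto
  qed
  fix b assume "b \<in> B"
  hence "?signed b" by blast
  thus "?signed (clifford44_volume J b)" unfolding clifford44_volume_def by (intro step) simp_all
qed

text \<open>The generators of Cl(r+p,s+q) are ordered as: the r positive generators of Cl(r,s), the
  p positive ones of Cl(p,q), the s negative ones of Cl(r,s), the q negative ones of Cl(p,q);
  \<open>Inl\<close>/\<open>Inr\<close> records which factor a generator comes from and its index there.\<close>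

definition sum_index :: "nat \<Rightarrow> nat \<Rightarrow> nat \<Rightarrow> nat \<Rightarrow> nat + nat" where
  "sum_index r p s k =
    (if k < r then Inl k else if k < r + p then Inr (k - r)
     else if k < r + p + s then Inl (k - p) else Inr (k - r - s))"

lemma sum_index_Inl:
  "sum_index r p s k = Inl i \<Longrightarrow> i < r + s \<and> gen_norm (r + p) k = gen_norm r i"
  by (auto simp: sum_index_def gen_norm_def split: if_splits)

lemma sum_index_Inr:
  "k < r + p + (s + q) \<Longrightarrow> sum_index r p s k = Inr j \<Longrightarrow> j < p + q \<and> gen_norm (r + p) k = gen_norm p j"
  by (auto simp: sum_index_def gen_norm_def split: if_splits)

lemma inj_sum_index: "inj (sum_index r p s)"
  by (auto simp: inj_def sum_index_def split: if_splits)

definition tensor_rep ::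
    "nat \<Rightarrow> nat \<Rightarrow> nat \<Rightarrow> (nat \<Rightarrow> real^'n \<Rightarrow> real^'n) \<Rightarrow> (real^'m \<Rightarrow> real^'m)
      \<Rightarrow> (nat \<Rightarrow> real^'m \<Rightarrow> real^'m) \<Rightarrow> nat \<Rightarrow> real^('n::finite \<times> 'm::finite) \<Rightarrow> real^('n \<times> 'm)"
  where "tensor_rep r p s JV \<Omega> JU k =
    (case sum_index r p s k of Inl i \<Rightarrow> tensor_map (JV i) \<Omega> | Inr j \<Rightarrow> tensor_map id (JU j))"

lemma linear_tensor_rep: "linear (tensor_rep r p s JV \<Omega> JU k)"
  by (simp add: tensor_rep_def linear_tensor_map split: sum.split)

lemma tensor_rep_tensor:
  assumes "clifford_rep r s JV" "clifford_rep p q JU" "linear \<Omega>" "k < r + p + (s + q)"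
  shows "tensor_rep r p s JV \<Omega> JU k (tensor v u) =
    (case sum_index r p s k of Inl i \<Rightarrow> tensor (JV i v) (\<Omega> u) | Inr j \<Rightarrow> tensor v (JU j u))"
  using assms sum_index_Inl[of r p s k] sum_index_Inr[of k r p s q]
  by (auto simp: tensor_rep_def tensor_map_tensor[OF linear_id] tensor_map_tensor clifford_rep_linear
      split: sum.split)

lemma tensor_rep_square:
  fixes JV :: "nat \<Rightarrow> real^'n::finite \<Rightarrow> real^'n" and JU :: "nat \<Rightarrow> real^'m::finite \<Rightarrow> real^'m"
  assumes JV: "clifford_rep r s JV" and JU: "clifford_rep p q JU" and \<Omega>: "linear \<Omega>"
    and \<Omega>_involution: "\<And>u. \<Omega> (\<Omega> u) = u" and k: "k < r + p + (s + q)"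
  shows "tensor_rep r p s JV \<Omega> JU k (tensor_rep r p s JV \<Omega> JU k x) = - (gen_norm (r + p) k *\<^sub>R x)"
proof -
  let ?J = "tensor_rep r p s JV \<Omega> JU k"
  have "?J \<circ> ?J = (\<lambda>x. - (gen_norm (r + p) k *\<^sub>R x))"
  proof (rule linear_eq_on_tensors)
    show "linear (?J \<circ> ?J)" by (intro linear_compose linear_tensor_rep)
    show "linear (\<lambda>x. - (gen_norm (r + p) k *\<^sub>R x) :: real^('n \<times> 'm))"
      by (rule linearI) (simp_all add: scaleR_add_right)
    fix v u
    show "(?J \<circ> ?J) (tensor v u) = - (gen_norm (r + p) k *\<^sub>R tensor v u)"
    proof (cases "sum_index r p s k")
      case (Inl i)
      with sum_index_Inl have "i < r + s" "gen_norm (r + p) k = gen_norm r i" by blast+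
      with Inl show ?thesis
        by (simp add: tensor_rep_tensor[OF JV JU \<Omega> k] \<Omega>_involution clifford_rep_square[OF JV]
            tensor_minus_left tensor_scaleR_left)
    next
      case (Inr j)
      with sum_index_Inr[OF k] have "j < p + q" "gen_norm (r + p) k = gen_norm p j" by blast+
      with Inr show ?thesis
        by (simp add: tensor_rep_tensor[OF JV JU \<Omega> k] clifford_rep_square[OF JU]
            tensor_minus_right tensor_scaleR_right)
    qed
  qed
  thus ?thesis by (simp add: fun_eq_iff)
qed

lemma tensor_rep_anticomm:
  fixes JV :: "nat \<Rightarrow> real^'n::finite \<Rightarrow> real^'n" and JU :: "nat \<Rightarrow> real^'m::finite \<Rightarrow> real^'m"
  assumes JV: "clifford_rep r s JV" and JU: "clifford_rep p q JU" and \<Omega>: "linear \<Omega>"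
    and \<Omega>_involution: "\<And>u. \<Omega> (\<Omega> u) = u"
    and \<Omega>_anticomm: "\<And>j u. j < p + q \<Longrightarrow> \<Omega> (JU j u) = - JU j (\<Omega> u)"
    and k: "k < r + p + (s + q)" and l: "l < r + p + (s + q)" and "k \<noteq> l"
  shows "tensor_rep r p s JV \<Omega> JU k (tensor_rep r p s JV \<Omega> JU l x) =
    - tensor_rep r p s JV \<Omega> JU l (tensor_rep r p s JV \<Omega> JU k x)"
proof -
  let ?J = "tensor_rep r p s JV \<Omega> JU"
  have index_neq: "sum_index r p s k \<noteq> sum_index r p s l"
    using inj_sum_index \<open>k \<noteq> l\<close> by (auto dest: injD)
  have "?J k \<circ> ?J l = (\<lambda>x. - (?J l \<circ> ?J k) x)"
  proof (rule linear_eq_on_tensors)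
    show "linear (?J k \<circ> ?J l)" "linear (\<lambda>x. - (?J l \<circ> ?J k) x)"
      by (intro linear_compose_neg linear_compose linear_tensor_rep)+
    fix v u
    note J_tensor = tensor_rep_tensor[OF JV JU \<Omega> k] tensor_rep_tensor[OF JV JU \<Omega> l]
    show "(?J k \<circ> ?J l) (tensor v u) = - (?J l \<circ> ?J k) (tensor v u)"
    proof (cases "sum_index r p s k"; cases "sum_index r p s l")
      fix i i' assume ki: "sum_index r p s k = Inl i" and li': "sum_index r p s l = Inl i'"
      with sum_index_Inl[OF ki] sum_index_Inl[OF li'] index_neq show ?thesis
        by (simp add: J_tensor \<Omega>_involution clifford_rep_anticomm[OF JV, of i i'] tensor_minus_left)
    next
      fix i j assume ki: "sum_index r p s k = Inl i" and lj: "sum_index r p s l = Inr j"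
      with sum_index_Inr[OF l lj] show ?thesis
        by (simp add: J_tensor \<Omega>_anticomm tensor_minus_right)
    next
      fix j i assume kj: "sum_index r p s k = Inr j" and li: "sum_index r p s l = Inl i"
      with sum_index_Inr[OF k kj] show ?thesis
        by (simp add: J_tensor \<Omega>_anticomm tensor_minus_right)
    next
      fix j j' assume kj: "sum_index r p s k = Inr j" and lj': "sum_index r p s l = Inr j'"
      with sum_index_Inr[OF k kj] sum_index_Inr[OF l lj'] index_neq show ?thesis
        by (simp add: J_tensor clifford_rep_anticomm[OF JU, of j j'] tensor_minus_right)
    qed
  qed
  thus ?thesis by (simp add: fun_eq_iff)
qed

lemma clifford_rep_tensor_rep:
  fixes JV :: "nat \<Rightarrow> real^'n::finite \<Rightarrow> real^'n" and JU :: "nat \<Rightarrow> real^'m::finite \<Rightarrow> real^'m"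
  assumes JV: "clifford_rep r s JV" and JU: "clifford_rep p q JU" and \<Omega>: "linear \<Omega>"
    and \<Omega>_involution: "\<And>u. \<Omega> (\<Omega> u) = u"
    and \<Omega>_anticomm: "\<And>j u. j < p + q \<Longrightarrow> \<Omega> (JU j u) = - JU j (\<Omega> u)"
  shows "clifford_rep (r + p) (s + q) (tensor_rep r p s JV \<Omega> JU)"
  unfolding clifford_rep_def
  using linear_tensor_rep tensor_rep_square[OF JV JU \<Omega> \<Omega>_involution]
    tensor_rep_anticomm[OF JV JU \<Omega> \<Omega>_involution \<Omega>_anticomm]
  by blast

lemma admissible_tensor_rep:
  fixes JV :: "nat \<Rightarrow> real^'n::finite \<Rightarrow> real^'n" and JU :: "nat \<Rightarrow> real^'m::finite \<Rightarrow> real^'m"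
  assumes V: "admissible r s JV gV" and U: "admissible p q JU gU" and \<Omega>: "linear \<Omega>"
    and \<Omega>_involution: "\<And>u. \<Omega> (\<Omega> u) = u"
    and \<Omega>_anticomm: "\<And>j u. j < p + q \<Longrightarrow> \<Omega> (JU j u) = - JU j (\<Omega> u)"
    and \<Omega>_self_adjoint: "\<And>u u'. gU (\<Omega> u) u' = gU u (\<Omega> u')"
    and g: "scalar_product g"
    and g_tensor: "\<And>v v' u u'. g (tensor v u) (tensor v' u') = gV v v' * gU u u'"
  shows "admissible (r + p) (s + q) (tensor_rep r p s JV \<Omega> JU) g"
proof -
  let ?J = "tensor_rep r p s JV \<Omega> JU"
  have JV: "clifford_rep r s JV" and JU: "clifford_rep p q JU"
    using V U unfolding admissible_def by blast+
  have bilinear_g: "bilinear g" using g unfolding scalar_product_def by blast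
  have "g (?J k x) y = - g x (?J k y)" if k: "k < r + p + (s + q)" for k x y
  proof -
    have "(\<lambda>x y. g (?J k x) y) = (\<lambda>x y. - g x (?J k y))"
    proof (rule bilinear_eq_on_tensors)
      show "bilinear (\<lambda>x y. g (?J k x) y)" "bilinear (\<lambda>x y. - g x (?J k y))"
        by (simp_all add: bilinear_compose_left bilinear_compose_right_neg bilinear_g linear_tensor_rep)
      show "g (?J k (tensor v u)) (tensor v' u') = - g (tensor v u) (?J k (tensor v' u'))" for v u v' u'
        using k sum_index_Inl[of r p s k] sum_index_Inr[of k r p s q]
        by (cases "sum_index r p s k")
          (auto simp: tensor_rep_tensor[OF JV JU \<Omega>] g_tensor admissible_skew[OF V]
            admissible_skew[OF U] \<Omega>_self_adjoint)
    qed
    thus ?thesis by metis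
  qed
  thus ?thesis unfolding admissible_def using clifford_rep_tensor_rep[OF JV JU \<Omega> \<Omega>_involution \<Omega>_anticomm] g
    by blast
qed

lemma integral_basis_tensor_rep:
  fixes JV :: "nat \<Rightarrow> real^'n::finite \<Rightarrow> real^'n" and JU :: "nat \<Rightarrow> real^'m::finite \<Rightarrow> real^'m"
  assumes JV: "clifford_rep r s JV" and JU: "clifford_rep p q JU" and \<Omega>: "linear \<Omega>"
    and BV: "integral_basis r s JV gV BV" and BU: "integral_basis p q JU gU BU"
    and gU: "bilinear gU" and \<Omega>_perm: "permutes_up_to_sign \<Omega> BU"
    and g: "bilinear g"
    and g_tensor: "\<And>v v' u u'. g (tensor v u) (tensor v' u') = gV v v' * gU u u'"
  shows "integral_basis (r + p) (s + q) (tensor_rep r p s JV \<Omega> JU) g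
    {tensor a b | a b. a \<in> BV \<and> b \<in> BU}"
proof -
  let ?B = "{tensor a b | a b. a \<in> BV \<and> b \<in> BU}" and ?J = "tensor_rep r p s JV \<Omega> JU"
  have orthV: "\<And>a a'. a \<in> BV \<Longrightarrow> a' \<in> BV \<Longrightarrow> a \<noteq> a' \<Longrightarrow> gV a a' = 0"
    and normV: "\<And>a. a \<in> BV \<Longrightarrow> gV a a = 1 \<or> gV a a = -1"
    and constV: "\<And>i a a'. i < r + s \<Longrightarrow> a \<in> BV \<Longrightarrow> a' \<in> BV \<Longrightarrow> gV (JV i a) a' \<in> {1, -1, 0}"
    using BV unfolding integral_basis_def by blast+
  have orthU: "\<And>b b'. b \<in> BU \<Longrightarrow> b' \<in> BU \<Longrightarrow> b \<noteq> b' \<Longrightarrow> gU b b' = 0"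
    and normU: "\<And>b. b \<in> BU \<Longrightarrow> gU b b = 1 \<or> gU b b = -1"
    and constU: "\<And>j b b'. j < p + q \<Longrightarrow> b \<in> BU \<Longrightarrow> b' \<in> BU \<Longrightarrow> gU (JU j b) b' \<in> {1, -1, 0}"
    using BU unfolding integral_basis_def by blast+
  have span: "span ?B = UNIV"
    using BV BU by (intro span_tensor_products) (simp_all add: integral_basis_def)
  have orth: "\<forall>x\<in>?B. \<forall>y\<in>?B. x \<noteq> y \<longrightarrow> g x y = 0"
  proof (intro ballI impI)
    fix x y assume "x \<in> ?B" "y \<in> ?B" "x \<noteq> y"
    then obtain a b a' b' where "x = tensor a b" "y = tensor a' b'" "a \<in> BV" "b \<in> BU" "a' \<in> BV" "b' \<in> BU"
      "a \<noteq> a' \<or> b \<noteq> b'"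
      by blast
    thus "g x y = 0" using orthV orthU by (auto simp: g_tensor)
  qed
  have norm: "\<forall>x\<in>?B. g x x = 1 \<or> g x x = -1"
  proof
    fix x assume "x \<in> ?B"
    then obtain a b where "x = tensor a b" "a \<in> BV" "b \<in> BU" by blast
    thus "g x x = 1 \<or> g x x = -1" using normV[of a] normU[of b] by (auto simp: g_tensor)
  qed
  have \<Omega>_value: "gU (\<Omega> b) b' \<in> {1, -1, 0}" if b: "b \<in> BU" and b': "b' \<in> BU" for b b'
  proof -
    obtain c where c: "c \<in> BU" "\<Omega> b = c \<or> \<Omega> b = - c"
      using \<Omega>_perm b unfolding permutes_up_to_sign_def by blast
    have "gU c b' \<in> {1, -1, 0}" by (rule integral_basis_value[OF BU c(1) b'])
    thus ?thesis using c(2) by (auto simp: bilinear_lneg[OF gU])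
  qed
  have "g (?J k x) y \<in> {1, -1, 0}" if k: "k < r + p + (s + q)" and "x \<in> ?B" "y \<in> ?B" for k x y
  proof -
    obtain a b a' b' where ab: "x = tensor a b" "y = tensor a' b'" "a \<in> BV" "b \<in> BU" "a' \<in> BV" "b' \<in> BU"
      using \<open>x \<in> ?B\<close> \<open>y \<in> ?B\<close> by blast
    show ?thesis
    proof (cases "sum_index r p s k")
      case (Inl i)
      with sum_index_Inl have "i < r + s" by blast
      with Inl ab constV[of i a a'] \<Omega>_value[of b b'] show ?thesis
        by (auto simp: tensor_rep_tensor[OF JV JU \<Omega> k] g_tensor)
    next
      case (Inr j)
      with sum_index_Inr[OF k] have "j < p + q" by blast
      with Inr ab constU[of j b b'] integral_basis_value[OF BV, of a a'] show ?thesis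
        by (auto simp: tensor_rep_tensor[OF JV JU \<Omega> k] g_tensor)
    qed
  qed
  moreover have "independent ?B" using independent_orthogonal[OF g orth] norm by force
  ultimately show ?thesis unfolding integral_basis_def using span orth norm by blast
qed

theorem theorem7p3:
  fixes r s :: nat
    and JV :: "nat \<Rightarrow> real^'n \<Rightarrow> real^'n" and gV :: "real^'n \<Rightarrow> real^'n \<Rightarrow> real"
    and JU :: "nat \<Rightarrow> real^'m \<Rightarrow> real^'m" and gU :: "real^'m \<Rightarrow> real^'m \<Rightarrow> real"
    and BU :: "(real^'m) set"
    and g :: "real^('n \<times> 'm) \<Rightarrow> real^('n \<times> 'm) \<Rightarrow> real"
  assumes V: "admissible_integral r s JV gV"
    and U: "admissible 4 4 JU gU"
    and BU: "integral_basis 4 4 JU gU BU"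
    and perm: "\<forall>j<8. permutes_up_to_sign (JU j) BU"
    and g_bil: "bilinear g"
    and g_tensor: "\<forall>v v' u u'. g (tensor v u) (tensor v' u') = gV v v' * gU u u'"
  shows "\<exists>J. admissible_integral (r + 4) (s + 4) J g"
proof -
  obtain BV where BV: "integral_basis r s JV gV BV" and V': "admissible r s JV gV"
    using V unfolding admissible_integral_def by blast
  have JV: "clifford_rep r s JV" and JU: "clifford_rep 4 4 JU"
    using V' U unfolding admissible_def by blast+
  have g_tensor': "\<And>v v' u u'. g (tensor v u) (tensor v' u') = gV v v' * gU u u'"
    using g_tensor by blast
  let ?\<Omega> = "clifford44_volume JU"
  let ?J = "tensor_rep r 4 s JV ?\<Omega> JU" and ?B = "{tensor a b | a b. a \<in> BV \<and> b \<in> BU}"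
  have basis: "integral_basis (r + 4) (s + 4) ?J g ?B"
    by (rule integral_basis_tensor_rep[OF JV JU linear_clifford44_volume[OF JU] BV BU
          admissible_bilinear[OF U] clifford44_volume_permutes_up_to_sign[OF JU perm] g_bil g_tensor'])
  have "scalar_product g"
    by (rule scalar_product_tensor[OF g_bil admissible_symmetric[OF V'] admissible_symmetric[OF U]
          g_tensor' basis])
  hence "admissible (r + 4) (s + 4) ?J g"
    using admissible_tensor_rep[OF V' U linear_clifford44_volume[OF JU]
        clifford44_volume_involution[OF JU] clifford44_volume_anticomm[OF JU]
        clifford44_volume_self_adjoint[OF U] _ g_tensor']
    by simp
  thus ?thesis using basis unfolding admissible_integral_def by blast
qed

end
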